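(* Let $\gamma=(\gamma_1,\dots,\gamma_b)$ be a parallel map on $V=V_1\oplus\cdots\oplus V_b$, $V_i\cong(\mathbb F_2)^m$ with $m\ge4$, and $0\gamma=0$. Suppose every $\gamma_i$ is differentially $4$-uniform and satisfies $\hat n(\gamma_i)=0$. If $\gamma$ maps $\mathcal{LA}_U(W_1|W_2)$ onto a non-trivial partition $\mathcal L(W)$, then $W$ and $W_1$ are walls and $W=W_1=W_2$; in particular $\mathcal{LA}_U(W_1|W_2)$ is linear.
   Context: Let $b>1$, $n=mb$, $V=(\mathbb F_2)^n=V_1\oplus\cdots\oplus V_b$, $V_i\cong(\mathbb F_2)^m$. Permutations act on the right. A parallel map is $\gamma\in\mathrm{Sym}(V)$ with $(v_1\oplus\cdots\oplus v_b)\gamma=v_1\gamma_1\oplus\cdots\oplus v_b\gamma_b$, $\gamma_i\in\mathrm{Sym}(V_i)$. A wall is $\bigoplus_{i\in I}V_i$ with $\emptyset\ne I\subsetneq\{1,\dots,b\}$. For $f:(\mathbb F_2)^m\to(\mathbb F_2)^m$, $\hat f_a(x)=f(x+a)+f(x)$; $f$ is differentially $\delta$-uniform if $\delta=\max_{a\ne0,b}|\{x:\hat f_a(x)=b\}|$; and $\hat n(f)=\max_{a\ne0}|\{v\ne0: x\mapsto\langle\hat f_a(x),v\rangle \text{ is constant}\}|$ with $\langle\cdot,\cdot\rangle$ the standard dot product. A permutation maps $\mathcal A$ onto $\mathcal B$ if it sends the blocks of $\mathcal A$ exactly onto those of $\mathcal B$; trivial partitions are the singleton partition and $\{V\}$.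 $\mathcal L(W)=\{W+v:v\in V\}$. For a subspace $U$ of dimension $n-1$ and subspaces $W_1,W_2\subseteq U$, $\mathcal{LA}_U(W_1|W_2)=\{W_1+v:v\in U\}\cup\{(W_2+\bar v)+v:v\in U\}$ for any $\bar v\in V\setminus U$. *)

theory Defs
  imports "HOL-Analysis.Analysis" "HOL-Library.Z2"
begin

instance bit :: finite
proof
  have "UNIV = {0::bit, 1}" by (auto intro: bit_not_zero_iff)
  then show "finite (UNIV :: bit set)" by (metis finite.emptyI finite.insertI)
qed

(* V_i = (F_2)^m  is  bit^'m  (m = CARD('m)),
   V = V_1 + ... + V_b  is  (bit^'m)^'b  (b = CARD('b)); block i of v is v$i. *)

definition parallel_map :: "('b \<Rightarrow> (bit^'m \<Rightarrow> bit^'m)) \<Rightarrow> (bit^'m)^'b \<Rightarrow> (bit^'m)^'b" where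
  "parallel_map g v = (\<chi> i. g i (v $ i))"

definition F2_subspace :: "'a::ab_group_add set \<Rightarrow> bool" where
  "F2_subspace W \<longleftrightarrow> 0 \<in> W \<and> (\<forall>x\<in>W. \<forall>y\<in>W. x + y \<in> W)"

definition is_wall :: "((bit^'m)^'b) set \<Rightarrow> bool" where
  "is_wall W \<longleftrightarrow> (\<exists>I. I \<noteq> {} \<and> I \<noteq> UNIV \<and> W = {v. \<forall>i. i \<notin> I \<longrightarrow> v $ i = 0})"

definition coset :: "'a::ab_group_add set \<Rightarrow> 'a \<Rightarrow> 'a set" where
  "coset W v = (\<lambda>w. w + v) ` W"

definition Lpart :: "'a::ab_group_add set \<Rightarrow> 'a set set" where
  "Lpart W = {coset W v | v. True}"

definition LApart :: "'a::ab_group_add set \<Rightarrow> 'a set \<Rightarrow> 'a set \<Rightarrow> 'a set set" where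
  "LApart U W1 W2 =
     (let vbar = (SOME x. x \<notin> U) in
       {coset W1 v | v. v \<in> U} \<union> {coset W2 (vbar + v) | v. v \<in> U})"

definition linear_partition :: "'a::ab_group_add set set \<Rightarrow> bool" where
  "linear_partition P \<longleftrightarrow> (\<exists>W. F2_subspace W \<and> P = Lpart W)"

definition trivial_partition :: "'a set set \<Rightarrow> bool" where
  "trivial_partition P \<longleftrightarrow> P = {{x} | x. True} \<or> P = {UNIV}"

definition maps_onto :: "('a \<Rightarrow> 'a) \<Rightarrow> 'a set set \<Rightarrow> 'a set set \<Rightarrow> bool" where
  "maps_onto g A B \<longleftrightarrow> (\<lambda>X. g ` X) ` A = B"

definition dot :: "bit^'m \<Rightarrow> bit^'m \<Rightarrow> bit" where
  "dot x y = (\<Sum>j\<in>UNIV. x $ j * y $ j)"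

definition dderiv :: "(bit^'m \<Rightarrow> bit^'m) \<Rightarrow> bit^'m \<Rightarrow> bit^'m \<Rightarrow> bit^'m" where
  "dderiv f a x = f (x + a) + f x"

definition diff_uniformity :: "(bit^'m \<Rightarrow> bit^'m) \<Rightarrow> nat" where
  "diff_uniformity f = Max {card {x. dderiv f a x = c} | a c. a \<noteq> 0}"

definition diff_uniform :: "(bit^'m \<Rightarrow> bit^'m) \<Rightarrow> nat \<Rightarrow> bool" where
  "diff_uniform f \<delta> \<longleftrightarrow> \<delta> = diff_uniformity f"

definition nhat :: "(bit^'m \<Rightarrow> bit^'m) \<Rightarrow> nat" where
  "nhat f = Max {card {v. v \<noteq> 0 \<and> (\<exists>k. \<forall>x. dot (dderiv f a x) v = k)} | a. a \<noteq> 0}"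

end

theory Submission
  imports Defs
begin

text \<open>
  Write \<open>G\<close> for the parallel map. As \<open>G\<close> maps the blocks of \<open>LA\<^sub>U(W\<^sub>1|W\<^sub>2)\<close> onto
  the cosets of \<open>W\<close>, the condition \<open>G x + G y \<in> W\<close> says that \<open>x\<close> and \<open>y\<close> lie in one
  block: both in \<open>U\<close> with \<open>x + y \<in> W\<^sub>1\<close>, or both outside \<open>U\<close> with \<open>x + y \<in> W\<^sub>2\<close>.

  Fix a block \<open>V\<^sub>i\<close> and let \<open>A = W \<inter> V\<^sub>i\<close>. Then \<open>A\<close> is \<open>0\<close> or \<open>V\<^sub>i\<close>. Otherwise,
  a nonzero \<open>t \<in> W\<^sub>1 \<inter> W\<^sub>2 \<inter> V\<^sub>i\<close> would put all derivatives of \<open>\<gamma>\<^sub>i\<close> in direction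
  \<open>t\<close> into the proper subspace \<open>A\<close>, hence into a hyperplane, against \<open>nhat(\<gamma>\<^sub>i) = 0\<close>;
  and if there is no such \<open>t\<close>, then \<open>|W\<^sub>1 \<inter> V\<^sub>i| = |W\<^sub>2 \<inter> V\<^sub>i| = |A|\<close> (via \<open>\<gamma>\<^sub>i\<close>)
  gives \<open>|A|\<^sup>2 \<le> |U \<inter> V\<^sub>i|\<close>, while 4-uniformity gives \<open>|U \<inter> V\<^sub>i| \<le> 4(|A| - 1)\<close>,
  which is impossible since \<open>|U \<inter> V\<^sub>i| \<ge> 2\<^sup>m / 2 \<ge> 8\<close>.
  If \<open>A = 0\<close>, a second-difference argument and 4-uniformity make every \<open>w \<in> W\<^sub>1 \<union> W\<^sub>2\<close>
  vanish on \<open>V\<^sub>i\<close>; if \<open>A = V\<^sub>i\<close>, then \<open>V\<^sub>i \<subseteq> W\<^sub>1 \<inter> W\<^sub>2\<close>. So \<open>W\<^sub>1 = W\<^sub>2\<close> is the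
  coordinate subspace spanned by the blocks with \<open>A = V\<^sub>i\<close>; it lies in \<open>W\<close>, and
  \<open>|W\<^sub>1| = |W|\<close> gives \<open>W = W\<^sub>1\<close>. Non-triviality of \<open>\<L>(W)\<close> makes it a wall.
\<close>

section \<open>Elementary abelian 2-groups\<close>

class char2_group = ab_group_add +
  assumes add_self [simp]: "x + x = 0"
begin

lemma add_self_left [simp]: "x + (x + y) = y"
  by (simp flip: add.assoc)

lemma add_self_right [simp]: "(y + x) + x = y"
  by (simp add: add.assoc)

lemma add_eq_0_iff_eq: "x + y = 0 \<longleftrightarrow> x = y"
  by (metis add_self add_self_left add_0_right)

lemma add_add_cancel [simp]: "(x + v) + (y + v) = x + y"
  by (simp add: add.assoc add.left_commute[of v y])

end

instance bit :: char2_group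
  by standard (metis add_bit_eq_xor xor_self_eq)

instance vec :: (char2_group, finite) char2_group
  by standard (simp add: vec_eq_iff)

lemma card_bit: "CARD(bit) = 2"
proof -
  have "(UNIV :: bit set) = {0, 1}" by (auto intro: bit_not_zero_iff)
  moreover have "card {0 :: bit, 1} = 2" by simp
  ultimately show ?thesis by simp
qed

lemma F2_subspace_zero: "F2_subspace S \<Longrightarrow> 0 \<in> S"
  by (simp add: F2_subspace_def)

lemma F2_subspace_add: "F2_subspace S \<Longrightarrow> x \<in> S \<Longrightarrow> y \<in> S \<Longrightarrow> x + y \<in> S"
  by (simp add: F2_subspace_def)

lemma F2_subspace_add_iff_left:
  "F2_subspace S \<Longrightarrow> (x::'a::char2_group) \<in> S \<Longrightarrow> x + y \<in> S \<longleftrightarrow> y \<in> S"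
  by (metis F2_subspace_add add_self_left)

lemma F2_subspace_sum:
  assumes "F2_subspace S" "\<And>j. j \<in> J \<Longrightarrow> f j \<in> S"
  shows "sum f J \<in> S"
  using assms(2) by (induction J rule: infinite_finite_induct)
    (use assms(1) in \<open>auto simp: F2_subspace_def\<close>)

lemma mem_coset_iff: "(x::'a::char2_group) \<in> coset S v \<longleftrightarrow> x + v \<in> S"
  unfolding coset_def by (auto intro: image_eqI[of x _ "x + v"])

lemma card_coset: "card (coset S v) = card S"
  unfolding coset_def by (rule card_image) (simp add: inj_on_def)

lemma card_translated_preimage:
  fixes f :: "'a::{char2_group,finite} \<Rightarrow> 'a"
  assumes "bij f"
  shows "card {u. f s + f u \<in> A} = card A"
proof -
  have "bij ((+) (f s) \<circ> f)"
    using assms by (intro bij_comp) (auto intro: bij_betwI[where g = "(+) (f s)"])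
  then have "card (((+) (f s) \<circ> f) -` A) = card A"
    by (intro card_vimage_inj) (auto simp: bij_def)
  then show ?thesis by (simp add: vimage_def)
qed

lemma card_mult_le_of_inter_subset_0:
  fixes S T R :: "'a::{char2_group,finite} set"
  assumes S: "F2_subspace S" and T: "F2_subspace T" and "S \<inter> T \<subseteq> {0}"
    and "F2_subspace R" "S \<subseteq> R" "T \<subseteq> R"
  shows "card S * card T \<le> card R"
proof -
  have "inj_on (\<lambda>(p, q). p + q) (S \<times> T)"
  proof (rule inj_onI, clarify)
    fix p q p' q' assume pq: "p \<in> S" "q \<in> T" "p' \<in> S" "q' \<in> T" "p + q = p' + q'"
    have "(p + p') + (q + q') = (p + q) + (p' + q')" by (simp add: add_ac)
    then have "p + p' = q + q'" using pq(5) by (simp add: add_eq_0_iff_eq)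
    moreover have "p + p' \<in> S" "q + q' \<in> T" using pq by (simp_all add: F2_subspace_add S T)
    ultimately have "p + p' = 0" using assms(3) by auto
    then show "p = p' \<and> q = q'" using pq(5) by (simp add: add_eq_0_iff_eq)
  qed
  moreover have "(\<lambda>(p, q). p + q) ` (S \<times> T) \<subseteq> R" using assms(4-6) by (auto intro: F2_subspace_add)
  ultimately have "card (S \<times> T) \<le> card R" by (intro card_inj_on_le) auto
  then show ?thesis by (simp add: card_cartesian_product)
qed

lemma F2_subspace_Un_coset:
  assumes "F2_subspace S"
  shows "F2_subspace (S \<union> coset S (y::'a::char2_group))"
proof -
  note add = F2_subspace_add[OF assms]
  have "x + z \<in> S \<union> coset S y" if "x \<in> S \<union> coset S y" "z \<in> S \<union> coset S y" for x z
  proof -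
    from that consider "x \<in> S" "z \<in> S" | "x \<in> S" "z + y \<in> S" | "x + y \<in> S" "z \<in> S"
      | "x + y \<in> S" "z + y \<in> S"
      by (auto simp: mem_coset_iff)
    then show ?thesis
    proof cases
      case 1
      then show ?thesis by (simp add: add)
    next
      case 2
      then have "x + (z + y) \<in> S" by (simp add: add)
      then show ?thesis by (simp add: mem_coset_iff add.assoc)
    next
      case 3
      then have "(x + y) + z \<in> S" by (simp add: add)
      then show ?thesis by (simp add: mem_coset_iff add_ac)
    next
      case 4
      then have "(x + y) + (z + y) \<in> S" using add by blast
      then show ?thesis by simp
    qed
  qed
  then show ?thesis using assms by (auto simp: F2_subspace_def)
qed

section \<open>Hyperplanes\<close>

definition F2_hyperplane :: "'a::ab_group_add set \<Rightarrow> bool" where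
  "F2_hyperplane S \<longleftrightarrow> F2_subspace S \<and> S \<noteq> UNIV \<and> (\<forall>x y. x \<notin> S \<longrightarrow> y \<notin> S \<longrightarrow> x + y \<in> S)"

lemma F2_hyperplane_add_iff:
  assumes "F2_hyperplane S"
  shows "(x::'a::char2_group) + y \<in> S \<longleftrightarrow> (x \<in> S \<longleftrightarrow> y \<in> S)"
proof -
  have S: "F2_subspace S" and out: "x \<notin> S \<Longrightarrow> y \<notin> S \<Longrightarrow> x + y \<in> S"
    using assms unfolding F2_hyperplane_def by blast+
  have "y \<in> S \<Longrightarrow> x + y \<in> S \<longleftrightarrow> x \<in> S"
    using F2_subspace_add_iff_left[OF S, of y x] by (simp add: add.commute)
  then show ?thesis
    using F2_subspace_add_iff_left[OF S, of x y] out by blast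
qed

lemma Un_coset_eq_UNIV:
  "F2_hyperplane S \<Longrightarrow> y \<notin> S \<Longrightarrow> S \<union> coset S (y::'a::char2_group) = UNIV"
  by (auto simp: mem_coset_iff F2_hyperplane_add_iff)

lemma F2_hyperplane_iff_card:
  fixes S :: "'a::{char2_group,finite} set"
  assumes "F2_subspace S"
  shows "F2_hyperplane S \<longleftrightarrow> 2 * card S = CARD('a)"
proof -
  have card_Un: "card (S \<union> coset S y) = 2 * card S" if "y \<notin> S" for y
  proof -
    have "S \<inter> coset S y = {}"
      using that assms by (auto simp: mem_coset_iff F2_subspace_add_iff_left)
    then show ?thesis by (simp add: card_Un_disjoint card_coset)
  qed
  show ?thesis
  proof
    assume "F2_hyperplane S"
    then obtain y where "y \<notin> S" "S \<union> coset S y = UNIV"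
      using Un_coset_eq_UNIV by (auto simp: F2_hyperplane_def)
    then show "2 * card S = CARD('a)" using card_Un by metis
  next
    assume card_S: "2 * card S = CARD('a)"
    have "S \<noteq> UNIV"
    proof
      assume "S = UNIV"
      then have "CARD('a) = 0" using card_S by simp
      then show False by simp
    qed
    moreover have "x + y \<in> S" if "x \<notin> S" "y \<notin> S" for x y
    proof -
      have "S \<union> coset S y = UNIV"
        using card_Un[OF that(2)] card_S by (simp add: card_subset_eq)
      then show ?thesis using that(1) by (auto simp: mem_coset_iff)
    qed
    ultimately show "F2_hyperplane S"
      using assms by (simp add: F2_hyperplane_def)
  qed
qed

lemma F2_subspace_le_hyperplane:
  fixes A :: "'a::{char2_group,finite} set"
  assumes "F2_subspace A" "A \<noteq> UNIV"
  shows "\<exists>B. F2_hyperplane B \<and> A \<subseteq> B"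
proof -
  define P where "P = {B. F2_subspace B \<and> B \<noteq> UNIV \<and> A \<subseteq> B}"
  have "finite P" "A \<in> P" using assms by (simp_all add: P_def)
  then obtain B where B: "B \<in> P" and maximal: "\<And>C. C \<in> P \<Longrightarrow> B \<subseteq> C \<Longrightarrow> B = C"
    using finite_has_maximal[of P] by blast
  have "x + y \<in> B" if "x \<notin> B" "y \<notin> B" for x y
  proof -
    have "F2_subspace (B \<union> coset B y)" using F2_subspace_Un_coset[of B y] B unfolding P_def by blast
    moreover have "y \<in> coset B y" using B by (simp add: P_def mem_coset_iff F2_subspace_zero)
    ultimately have "B \<union> coset B y = UNIV"
      using maximal[of "B \<union> coset B y"] B \<open>y \<notin> B\<close> unfolding P_def by blast
    then show ?thesis using \<open>x \<notin> B\<close> by (auto simp: mem_coset_iff)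
  qed
  then have "F2_hyperplane B" using B by (simp add: P_def F2_hyperplane_def)
  then show ?thesis using B by (auto simp: P_def)
qed

lemma additive_eq_dot:
  assumes "Modules.additive (phi :: bit^'n \<Rightarrow> bit)"
  shows "phi x = dot x (\<chi> j. phi (axis j 1))"
proof -
  have scale: "phi (c *s y) = c * phi y" for c y
    by (cases c) (simp_all add: additive.zero[OF assms])
  have "phi x = phi (\<Sum>j\<in>UNIV. x $ j *s axis j 1)" by (simp only: basis_expansion)
  also have "\<dots> = (\<Sum>j\<in>UNIV. phi (x $ j *s axis j 1))" by (rule additive.sum[OF assms])
  also have "\<dots> = (\<Sum>j\<in>UNIV. x $ j * phi (axis j 1))" by (simp only: scale)
  finally show ?thesis by (simp add: dot_def)
qed

lemma F2_hyperplane_dot: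
  assumes "F2_hyperplane (B :: (bit^'n) set)"
  shows "\<exists>v. v \<noteq> 0 \<and> (\<forall>y\<in>B. dot y v = 0)"
proof -
  define phi where "phi x = (if x \<in> B then 0 else 1 :: bit)" for x
  have "Modules.additive phi"
  proof
    fix x y
    show "phi (x + y) = phi x + phi y"
      by (cases "x \<in> B"; cases "y \<in> B") (simp_all add: phi_def F2_hyperplane_add_iff[OF assms])
  qed
  then have dot_phi: "dot x (\<chi> j. phi (axis j 1)) = phi x" for x
    by (rule additive_eq_dot[symmetric])
  obtain y where "y \<notin> B" using assms unfolding F2_hyperplane_def by blast
  have "(\<chi> j. phi (axis j 1)) \<noteq> 0"
  proof
    assume "(\<chi> j. phi (axis j 1)) = 0"
    then have "phi y = 0" using dot_phi[of y] by (simp add: dot_def)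
    then show False using \<open>y \<notin> B\<close> by (simp add: phi_def)
  qed
  moreover have "\<forall>y\<in>B. dot y (\<chi> j. phi (axis j 1)) = 0"
    using dot_phi by (simp add: phi_def[of y for y])
  ultimately show ?thesis by blast
qed

section \<open>Derivatives\<close>

lemma card_dderiv_fibre_le:
  assumes "diff_uniform f \<delta>" "a \<noteq> 0"
  shows "card {x. dderiv f a x = c} \<le> \<delta>"
proof -
  have "finite {card {x. dderiv f a x = c} |a c. a \<noteq> 0}"
    by (rule finite_subset[of _ "(\<lambda>(a, c). card {x. dderiv f a x = c}) ` UNIV"]) auto
  then show ?thesis
    using assms by (auto simp: diff_uniform_def diff_uniformity_def intro!: Max_ge)
qed

lemma card_le_dderiv_image:
  assumes "diff_uniform f \<delta>" "a \<noteq> 0" "\<And>x. x \<in> T \<Longrightarrow> dderiv f a x \<in> C"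
  shows "card T \<le> \<delta> * card C"
proof -
  have "card T \<le> card (\<Union>c\<in>C. {x. dderiv f a x = c})"
    using assms(3) by (intro card_mono) auto
  also have "\<dots> \<le> (\<Sum>c\<in>C. card {x. dderiv f a x = c})"
    by (rule card_UN_le) simp
  also have "\<dots> \<le> card C * \<delta>"
    using sum_bounded_above[of C "\<lambda>c. card {x. dderiv f a x = c}" \<delta>]
      card_dderiv_fibre_le[OF assms(1,2)] by simp
  finally show ?thesis by (simp add: mult.commute)
qed

lemma dderiv_nonzero:
  assumes "inj f" "a \<noteq> 0"
  shows "dderiv f a x \<noteq> 0"
  using assms by (simp add: dderiv_def add_eq_0_iff_eq inj_eq)

lemma nhat_0_no_constant_component:
  assumes "nhat f = 0" "a \<noteq> 0" "v \<noteq> 0"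
  shows "\<not> (\<forall>x. dot (dderiv f a x) v = k)"
proof
  assume const: "\<forall>x. dot (dderiv f a x) v = k"
  let ?T = "\<lambda>a. {v. v \<noteq> 0 \<and> (\<exists>k. \<forall>x. dot (dderiv f a x) v = k)}"
  have "finite {card (?T a) | a. a \<noteq> 0}"
    by (rule finite_subset[of _ "(\<lambda>a. card (?T a)) ` UNIV"]) auto
  then have "card (?T a) \<le> nhat f"
    unfolding nhat_def using assms(2) by (auto intro!: Max_ge)
  then have "?T a = {}" using assms(1) by simp
  moreover have "v \<in> ?T a" using assms(3) const by blast
  ultimately show False by blast
qed

lemma nhat_0_dderiv_range_eq_UNIV:
  assumes "nhat f = 0" "a \<noteq> 0" "F2_subspace A" "\<And>x. dderiv f a x \<in> A"
  shows "A = UNIV"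
proof (rule ccontr)
  assume "A \<noteq> UNIV"
  then obtain B where "F2_hyperplane B" "A \<subseteq> B"
    using F2_subspace_le_hyperplane assms(3) by blast
  then obtain v where "v \<noteq> 0" "\<forall>y\<in>B. dot y v = 0"
    using F2_hyperplane_dot by blast
  then have "\<forall>x. dot (dderiv f a x) v = 0" using assms(4) \<open>A \<subseteq> B\<close> by blast
  then show False using nhat_0_no_constant_component assms(1,2) \<open>v \<noteq> 0\<close> by blast
qed

section \<open>Parallel maps, slices and walls\<close>

lemma parallel_map_nth [simp]: "parallel_map g x $ i = g i (x $ i)"
  by (simp add: parallel_map_def)

lemma parallel_map_zero_iff: "parallel_map g 0 = 0 \<longleftrightarrow> (\<forall>i. g i 0 = 0)"
  by (simp add: vec_eq_iff)

lemma bij_parallel_map: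
  assumes "\<And>i. bij (g i)"
  shows "bij (parallel_map g)"
proof (rule o_bij)
  show "parallel_map (\<lambda>i. inv (g i)) \<circ> parallel_map g = id"
    using assms by (simp add: fun_eq_iff vec_eq_iff bij_is_inj)
  show "parallel_map g \<circ> parallel_map (\<lambda>i. inv (g i)) = id"
    using assms by (simp add: fun_eq_iff vec_eq_iff bij_is_surj surj_f_inv_f)
qed

lemma axis_nth_if: "axis i x $ j = (if j = i then x else 0)"
  by (simp add: axis_def)

lemma axis_zero [simp]: "axis i 0 = 0"
  by (simp add: axis_def vec_eq_iff)

lemma axis_add: "axis i (x + y) = axis i x + axis i (y::'a::monoid_add)"
  by (simp add: vec_eq_iff axis_def)

lemma parallel_map_axis:
  "(\<And>i. g i 0 = 0) \<Longrightarrow> parallel_map g (axis i s) = axis i (g i s)"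
  by (simp add: vec_eq_iff axis_def)

lemma parallel_map_add_axis:
  "parallel_map g (x + axis i d) + parallel_map g x = axis i (dderiv (g i) d (x $ i))"
  by (simp add: vec_eq_iff axis_def dderiv_def)

lemma parallel_map_second_difference:
  "parallel_map g y + parallel_map g (y + w)
     + (parallel_map g (y + axis i s) + parallel_map g (y + axis i s + w))
   = axis i (dderiv (g i) (w $ i) (y $ i + s) + dderiv (g i) (w $ i) (y $ i))"
proof (subst vec_eq_iff, intro allI)
  fix j
  show "(parallel_map g y + parallel_map g (y + w)
     + (parallel_map g (y + axis i s) + parallel_map g (y + axis i s + w))) $ j
   = axis i (dderiv (g i) (w $ i) (y $ i + s) + dderiv (g i) (w $ i) (y $ i)) $ j"
    by (cases "j = i") (simp_all add: axis_nth_if dderiv_def add_ac)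
qed

text \<open>\<open>slice S i\<close> is \<open>S \<inter> V\<^sub>i\<close>, written in the coordinates of the block \<open>V\<^sub>i\<close>.\<close>

definition slice :: "('a::zero^'n) set \<Rightarrow> 'n \<Rightarrow> 'a set" where
  "slice S i = {d. axis i d \<in> S}"

lemma slice_mono: "S \<subseteq> T \<Longrightarrow> slice S i \<subseteq> slice T i"
  by (auto simp: slice_def)

lemma F2_subspace_slice: "F2_subspace S \<Longrightarrow> F2_subspace (slice S i)"
  by (simp add: F2_subspace_def slice_def axis_add)

lemma F2_hyperplane_slice:
  "F2_hyperplane S \<Longrightarrow> slice S i \<noteq> UNIV \<Longrightarrow> F2_hyperplane (slice S i)"
  by (simp add: F2_hyperplane_def F2_subspace_slice) (simp add: slice_def axis_add)

definition coordinate_subspace :: "'n set \<Rightarrow> ('a::zero^'n) set" where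
  "coordinate_subspace I = {v. \<forall>i. i \<notin> I \<longrightarrow> v $ i = 0}"

lemma coordinate_subspace_empty: "coordinate_subspace {} = {0}"
  by (auto simp: coordinate_subspace_def vec_eq_iff)

lemma coordinate_subspace_UNIV: "coordinate_subspace UNIV = UNIV"
  by (simp add: coordinate_subspace_def)

lemma coordinate_subspace_subset:
  fixes S :: "('a::ab_group_add^'n) set"
  assumes "F2_subspace S" "\<And>i. i \<in> I \<Longrightarrow> slice S i = UNIV"
  shows "coordinate_subspace I \<subseteq> S"
proof
  fix v :: "'a^'n" assume "v \<in> coordinate_subspace I"
  then have "v = (\<Sum>i\<in>I. axis i (v $ i))"
    by (auto simp: vec_eq_iff sum_component axis_nth_if coordinate_subspace_def)
  also have "\<dots> \<in> S"
    using assms by (intro F2_subspace_sum) (auto simp: slice_def)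
  finally show "v \<in> S" .
qed

section \<open>Partitions into cosets\<close>

lemma Lpart_zero: "Lpart {0::'a::ab_group_add} = {{x} | x. True}"
  by (simp add: Lpart_def coset_def)

lemma Lpart_UNIV: "Lpart (UNIV :: 'a::ab_group_add set) = {UNIV}"
proof -
  have "coset UNIV v = (UNIV :: 'a set)" for v
    unfolding coset_def by (auto intro: image_eqI[of _ _ "x - v" for x])
  then show ?thesis by (auto simp: Lpart_def)
qed

lemma maps_onto_Lpart_same_block_iff:
  fixes G :: "'a::char2_group \<Rightarrow> 'a"
  assumes "inj G" "F2_subspace W" "maps_onto G P (Lpart W)"
  shows "(\<exists>X\<in>P. x \<in> X \<and> y \<in> X) \<longleftrightarrow> G x + G y \<in> W"
proof
  assume "\<exists>X\<in>P. x \<in> X \<and> y \<in> X"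
  then obtain X where "X \<in> P" "x \<in> X" "y \<in> X" by blast
  moreover have "G ` X \<in> Lpart W" using assms(3) \<open>X \<in> P\<close> unfolding maps_onto_def by blast
  ultimately obtain v where "x \<in> X" "y \<in> X" "G ` X = coset W v" by (auto simp: Lpart_def)
  then have "G x + v \<in> W" "G y + v \<in> W" by (auto simp flip: mem_coset_iff)
  then have "(G x + v) + (G y + v) \<in> W" by (rule F2_subspace_add[OF assms(2)])
  then show "G x + G y \<in> W" by simp
next
  assume xy: "G x + G y \<in> W"
  have "coset W (G x) \<in> Lpart W" by (auto simp: Lpart_def)
  then obtain X where "X \<in> P" "G ` X = coset W (G x)"
    using assms(3) unfolding maps_onto_def by (metis imageE)
  moreover have "G x \<in> coset W (G x)" "G y \<in> coset W (G x)"
    using assms(2) xy by (simp_all add: mem_coset_iff F2_subspace_zero add.commute)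
  ultimately show "\<exists>X\<in>P. x \<in> X \<and> y \<in> X"
    using inj_image_mem_iff[OF assms(1)] by metis
qed

lemma LApart_eq:
  assumes "F2_hyperplane U"
  obtains vbar where "vbar \<notin> U"
    "LApart U W1 W2 = {coset W1 v | v. v \<in> U} \<union> {coset W2 (vbar + v) | v. v \<in> U}"
proof
  show "(SOME x. x \<notin> U) \<notin> U"
    using assms unfolding F2_hyperplane_def by (metis (mono_tags) UNIV_eq_I someI_ex)
qed (simp add: LApart_def)

lemma same_block_LApart_iff:
  fixes U W1 W2 :: "'a::char2_group set"
  assumes U: "F2_hyperplane U"
    and W1: "F2_subspace W1" "W1 \<subseteq> U" and W2: "F2_subspace W2" "W2 \<subseteq> U"
  shows "(\<exists>X\<in>LApart U W1 W2. x \<in> X \<and> y \<in> X) \<longleftrightarrow>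
    (x \<in> U \<and> y \<in> U \<and> x + y \<in> W1) \<or> (x \<notin> U \<and> y \<notin> U \<and> x + y \<in> W2)"
proof -
  obtain vbar where vbar: "vbar \<notin> U"
    and LA: "LApart U W1 W2 = {coset W1 v | v. v \<in> U} \<union> {coset W2 (vbar + v) | v. v \<in> U}"
    using LApart_eq[OF U] .
  note add_U = F2_hyperplane_add_iff[OF U]
  show ?thesis
  proof
    assume "\<exists>X\<in>LApart U W1 W2. x \<in> X \<and> y \<in> X"
    then consider v where "v \<in> U" "x + v \<in> W1" "y + v \<in> W1"
      | v where "v \<in> U" "x + (vbar + v) \<in> W2" "y + (vbar + v) \<in> W2"
      unfolding LA by (auto simp: mem_coset_iff)
    then show "(x \<in> U \<and> y \<in> U \<and> x + y \<in> W1) \<or> (x \<notin> U \<and> y \<notin> U \<and> x + y \<in> W2)"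
    proof cases
      case 1
      then have "(x + v) + (y + v) \<in> W1" using F2_subspace_add[OF W1(1)] by blast
      moreover have "x \<in> U" "y \<in> U" using 1 W1(2) add_U by blast+
      ultimately show ?thesis by simp
    next
      case 2
      then have "(x + (vbar + v)) + (y + (vbar + v)) \<in> W2" using F2_subspace_add[OF W2(1)] by blast
      moreover have "x \<notin> U" "y \<notin> U" using 2 W2(2) vbar add_U by blast+
      ultimately show ?thesis by simp
    qed
  next
    assume "(x \<in> U \<and> y \<in> U \<and> x + y \<in> W1) \<or> (x \<notin> U \<and> y \<notin> U \<and> x + y \<in> W2)"
    then show "\<exists>X\<in>LApart U W1 W2. x \<in> X \<and> y \<in> X"
    proof
      assume "x \<in> U \<and> y \<in> U \<and> x + y \<in> W1"
      then have "x \<in> coset W1 x" "y \<in> coset W1 x" "coset W1 x \<in> LApart U W1 W2"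
        using W1(1) by (auto simp: mem_coset_iff F2_subspace_zero add.commute LA)
      then show ?thesis by blast
    next
      assume xy: "x \<notin> U \<and> y \<notin> U \<and> x + y \<in> W2"
      then have "vbar + x \<in> U" using vbar add_U by blast
      then have "coset W2 x \<in> LApart U W1 W2"
        unfolding LA by (metis (mono_tags, lifting) UnI2 add_self_left mem_Collect_eq)
      moreover have "x \<in> coset W2 x" "y \<in> coset W2 x"
        using W2(1) xy by (auto simp: mem_coset_iff F2_subspace_zero add.commute)
      ultimately show ?thesis by blast
    qed
  qed
qed

lemma LApart_eq_Lpart:
  assumes "F2_hyperplane U"
  shows "LApart U S S = Lpart (S :: 'a::char2_group set)"
proof -
  obtain vbar where vbar: "vbar \<notin> U"
    and LA: "LApart U S S = {coset S v | v. v \<in> U} \<union> {coset S (vbar + v) | v. v \<in> U}"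
    using LApart_eq[OF assms] .
  have "coset S v \<in> LApart U S S" for v
  proof (cases "v \<in> U")
    case False
    then have "vbar + v \<in> U" using vbar F2_hyperplane_add_iff[OF assms] by blast
    then show ?thesis unfolding LA by (metis (mono_tags, lifting) UnI2 add_self_left mem_Collect_eq)
  qed (auto simp: LA)
  then show ?thesis by (auto simp: LA Lpart_def)
qed

section \<open>Parallel images of LA-partitions\<close>

locale parallel_LA_onto_L =
  fixes g :: "'b::finite \<Rightarrow> bit^'m::finite \<Rightarrow> bit^'m"
    and U W W1 W2 :: "((bit^'m)^'b) set"
  assumes m_ge4: "CARD('m) \<ge> 4"
    and g_bij: "\<And>i. bij (g i)"
    and g_zero: "\<And>i. g i 0 = 0"
    and diff4: "\<And>i. diff_uniform (g i) 4"
    and nhat0: "\<And>i. nhat (g i) = 0"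
    and U_hyperplane: "F2_hyperplane U"
    and W_sub: "F2_subspace W"
    and W1_sub: "F2_subspace W1" and W1U: "W1 \<subseteq> U"
    and W2_sub: "F2_subspace W2" and W2U: "W2 \<subseteq> U"
    and block_iff: "\<And>x y. parallel_map g x + parallel_map g y \<in> W \<longleftrightarrow>
      (x \<in> U \<and> y \<in> U \<and> x + y \<in> W1) \<or> (x \<notin> U \<and> y \<notin> U \<and> x + y \<in> W2)"
begin

abbreviation G :: "(bit^'m)^'b \<Rightarrow> (bit^'m)^'b" where
  "G \<equiv> parallel_map g"

lemma G_bij: "bij G"
  using g_bij by (rule bij_parallel_map)

lemma U_sub: "F2_subspace U"
  using U_hyperplane by (simp add: F2_hyperplane_def)

lemma add_U_iff: "x + y \<in> U \<longleftrightarrow> (x \<in> U \<longleftrightarrow> y \<in> U)"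
  by (rule F2_hyperplane_add_iff[OF U_hyperplane])

lemma slice_block_iff:
  "g i s + g i u \<in> slice W i \<longleftrightarrow>
     (s \<in> slice U i \<and> u \<in> slice U i \<and> s + u \<in> slice W1 i) \<or>
     (s \<notin> slice U i \<and> u \<notin> slice U i \<and> s + u \<in> slice W2 i)"
  using block_iff[of "axis i s" "axis i u"] by (simp add: slice_def parallel_map_axis g_zero axis_add)

lemma slice_W1_iff: "g i u \<in> slice W i \<longleftrightarrow> u \<in> slice W1 i"
  using slice_block_iff[of i 0 u] W1U F2_subspace_zero[OF F2_subspace_slice[OF U_sub]]
  by (auto simp: g_zero slice_def)

lemma card_slice_W1: "card (slice W1 i) = card (slice W i)"
  using card_translated_preimage[OF g_bij[of i], where s = 0 and A = "slice W i"]
  by (simp add: g_zero slice_W1_iff)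

lemma card_slice_W2:
  assumes "s \<notin> slice U i"
  shows "card (slice W2 i) = card (slice W i)"
proof -
  have "g i s + g i u \<in> slice W i \<longleftrightarrow> u \<in> coset (slice W2 i) s" for u
  proof -
    have "u \<notin> slice U i" if "u + s \<in> slice W2 i"
      using that assms slice_mono[OF W2U, of i] F2_subspace_add_iff_left[OF F2_subspace_slice[OF U_sub]]
      by (metis add_self_right subsetD)
    then show ?thesis using slice_block_iff[of i s u] assms by (auto simp: mem_coset_iff add.commute)
  qed
  then have "{u. g i s + g i u \<in> slice W i} = coset (slice W2 i) s" by blast
  then show ?thesis using card_translated_preimage[OF g_bij[of i]] by (metis card_coset)
qed

lemma card_slice_U_ge: "8 \<le> card (slice U i)"
proof -
  have "16 \<le> CARD(bit^'m)"
    using power_increasing[of 4 "CARD('m)" "2::nat"] m_ge4 by (simp add: card_bit)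
  moreover have "CARD(bit^'m) \<le> 2 * card (slice U i)"
  proof (cases "slice U i = UNIV")
    case False
    then have "F2_hyperplane (slice U i)" by (rule F2_hyperplane_slice[OF U_hyperplane])
    then show ?thesis by (simp add: F2_hyperplane_iff_card F2_subspace_slice U_sub)
  qed simp
  ultimately show ?thesis by linarith
qed

lemma slice_W_eq_UNIV_of_common_nonzero:
  assumes "a \<noteq> 0" "a \<in> slice W1 i" "a \<in> slice W2 i"
  shows "slice W i = UNIV"
proof (rule nhat_0_dderiv_range_eq_UNIV[OF nhat0 assms(1) F2_subspace_slice[OF W_sub]])
  fix s
  have "a \<in> slice U i" using assms(2) W1U by (auto simp: slice_def)
  then have "s + a \<in> slice U i \<longleftrightarrow> s \<in> slice U i"
    using F2_subspace_add_iff_left[OF F2_subspace_slice[OF U_sub], of a i s] by (simp add: add.commute)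
  moreover have "(s + a) + s = a" by (simp add: add.commute add.left_commute)
  ultimately show "dderiv (g i) a s \<in> slice W i"
    using slice_block_iff[of i "s + a" s] assms(2,3) by (auto simp: dderiv_def)
qed

lemma slice_W1_subset_slice_W2:
  assumes "slice U i = UNIV"
  shows "slice W1 i \<subseteq> slice W2 i"
proof
  fix t assume "t \<in> slice W1 i"
  obtain v where "v \<notin> U" using U_hyperplane by (auto simp: F2_hyperplane_def)
  define x where "x = v + axis i (v $ i)"
  have "axis i (v $ i) \<in> U" using assms(1) by (auto simp: slice_def)
  then have "x \<notin> U" using \<open>v \<notin> U\<close> add_U_iff by (simp add: x_def)
  have "G (x + axis i t) + G x = axis i (g i t)"
    using parallel_map_add_axis[of g x i t] by (simp add: x_def dderiv_def g_zero)
  then have "G (x + axis i t) + G x \<in> W"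
    using \<open>t \<in> slice W1 i\<close> slice_W1_iff by (simp add: slice_def)
  then have "(x + axis i t) + x \<in> W2" using block_iff \<open>x \<notin> U\<close> by blast
  then show "t \<in> slice W2 i" by (simp add: slice_def add.commute)
qed

lemma card_slice_U_le:
  assumes "t \<in> slice W1 i" "t \<noteq> 0"
  shows "card (slice U i) \<le> 4 * (card (slice W i) - 1)"
proof -
  have "dderiv (g i) t s \<in> slice W i - {0}" if "s \<in> slice U i" for s
  proof -
    have "t \<in> slice U i" using assms(1) W1U by (auto simp: slice_def)
    then have "s + t \<in> slice U i" using that F2_subspace_add[OF F2_subspace_slice[OF U_sub]] by blast
    moreover have "(s + t) + s = t" by (simp add: add.commute add.left_commute)
    ultimately have "dderiv (g i) t s \<in> slice W i"
      using slice_block_iff[of i "s + t" s] that assms(1) by (auto simp: dderiv_def)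
    then show ?thesis using dderiv_nonzero[OF bij_is_inj[OF g_bij] assms(2)] by simp
  qed
  then have "card (slice U i) \<le> 4 * card (slice W i - {0})"
    by (rule card_le_dderiv_image[OF diff4 assms(2)])
  then show ?thesis
    using F2_subspace_zero[OF F2_subspace_slice[OF W_sub]] by (simp add: card_Diff_singleton)
qed

lemma slice_W_eq_0_or_UNIV: "slice W i = {0} \<or> slice W i = UNIV"
proof (rule ccontr)
  assume "\<not> ?thesis"
  then have nonzero: "slice W i \<noteq> {0}" and proper: "slice W i \<noteq> UNIV" by auto
  have common: "slice W1 i \<inter> slice W2 i \<subseteq> {0}" using slice_W_eq_UNIV_of_common_nonzero proper by blast
  obtain a where "a \<in> slice W i" "a \<noteq> 0"
    using nonzero F2_subspace_zero[OF F2_subspace_slice[OF W_sub]] by blast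
  define t where "t = inv (g i) a"
  have "g i t = a" using g_bij by (simp add: t_def bij_is_surj surj_f_inv_f)
  then have t: "t \<in> slice W1 i" "t \<noteq> 0"
    using \<open>a \<in> slice W i\<close> \<open>a \<noteq> 0\<close> slice_W1_iff g_zero by auto
  show False
  proof (cases "slice U i = UNIV")
    case True
    then show False using slice_W1_subset_slice_W2 t common by blast
  next
    case False
    then obtain s where "s \<notin> slice U i" by blast
    let ?c = "card (slice W i)" and ?N = "card (slice U i)"
    have "?c * ?c \<le> ?N"
      using card_mult_le_of_inter_subset_0[OF F2_subspace_slice[OF W1_sub] F2_subspace_slice[OF W2_sub]
          common F2_subspace_slice[OF U_sub]] W1U W2U
        card_slice_W1 card_slice_W2[OF \<open>s \<notin> slice U i\<close>]
      by (auto simp: slice_def)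
    moreover have "?N \<le> 4 * (?c - 1)" using card_slice_U_le t by blast
    moreover have "8 \<le> ?N" by (rule card_slice_U_ge)
    ultimately show False
    proof (cases "4 \<le> ?c")
      case True
      then have "4 * ?c \<le> ?c * ?c" "4 * (?c - 1) < 4 * ?c" by simp_all
      with \<open>?c * ?c \<le> ?N\<close> \<open>?N \<le> 4 * (?c - 1)\<close> show False by linarith
    next
      case False
      with \<open>8 \<le> ?N\<close> \<open>?N \<le> 4 * (?c - 1)\<close> have "?c = 3" by linarith
      with \<open>?c * ?c \<le> ?N\<close> \<open>?N \<le> 4 * (?c - 1)\<close> show False by simp
    qed
  qed
qed

lemma nth_eq_0_of_slice_W_eq_0:
  assumes "slice W i = {0}"
    and "\<And>s. s \<in> slice U i \<Longrightarrow> G y + G (y + w) + (G (y + axis i s) + G (y + axis i s + w)) \<in> W"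
  shows "w $ i = 0"
proof (rule ccontr)
  assume "w $ i \<noteq> 0"
  let ?d = "dderiv (g i) (w $ i)"
  have "?d x \<in> {?d (y $ i)}" if x: "x \<in> (+) (y $ i) ` slice U i" for x
  proof -
    obtain s where s: "x = y $ i + s" "s \<in> slice U i" using x by (rule imageE)
    then have "axis i (?d (y $ i + s) + ?d (y $ i)) \<in> W"
      using assms(2) by (simp add: parallel_map_second_difference)
    then have "?d (y $ i + s) + ?d (y $ i) = 0" using assms(1) by (auto simp: slice_def)
    then show ?thesis using s by (simp add: add_eq_0_iff_eq)
  qed
  then have "card ((+) (y $ i) ` slice U i) \<le> 4 * card {?d (y $ i)}"
    by (rule card_le_dderiv_image[OF diff4 \<open>w $ i \<noteq> 0\<close>])
  moreover have "card ((+) (y $ i) ` slice U i) = card (slice U i)"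
    by (rule card_image) (simp add: inj_on_def)
  ultimately show False using card_slice_U_ge[of i] by simp
qed

lemma W1_W2_subset_coordinate_subspace:
  "W1 \<union> W2 \<subseteq> coordinate_subspace {i. slice W i = UNIV}"
proof
  fix w assume "w \<in> W1 \<union> W2"
  moreover obtain v where "v \<notin> U" using U_hyperplane by (auto simp: F2_hyperplane_def)
  ultimately obtain y where y: "w \<in> W1 \<and> y \<in> U \<or> w \<in> W2 \<and> y \<notin> U"
    using F2_subspace_zero[OF U_sub] by blast
  have "w \<in> U" using y W1U W2U by auto
  have translate: "G z + G (z + w) \<in> W" if "z \<in> U \<longleftrightarrow> y \<in> U" for z
    using block_iff[of z "z + w"] y that add_U_iff[of z w] \<open>w \<in> U\<close> by auto
  show "w \<in> coordinate_subspace {i. slice W i = UNIV}"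
    unfolding coordinate_subspace_def
  proof (intro CollectI allI impI)
    fix i assume "i \<notin> {i. slice W i = UNIV}"
    then have "slice W i = {0}" using slice_W_eq_0_or_UNIV by auto
    then show "w $ i = 0"
    proof (rule nth_eq_0_of_slice_W_eq_0)
      fix s assume "s \<in> slice U i"
      then have "y + axis i s \<in> U \<longleftrightarrow> y \<in> U" using add_U_iff by (auto simp: slice_def)
      then show "G y + G (y + w) + (G (y + axis i s) + G (y + axis i s + w)) \<in> W"
        using translate F2_subspace_add[OF W_sub] by blast
    qed
  qed
qed

lemma slice_W1_W2_eq_UNIV:
  assumes "slice W i = UNIV"
  shows "slice W1 i = UNIV" "slice W2 i = UNIV"
proof -
  have step: "G (y + axis i e) + G y \<in> W" for y e
    using assms by (simp add: parallel_map_add_axis slice_def set_eq_iff)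
  show "slice W1 i = UNIV"
    using block_iff[of "0 + axis i e" 0 for e] step[of 0] F2_subspace_zero[OF U_sub]
    by (auto simp: slice_def)
  obtain v where "v \<notin> U" using U_hyperplane by (auto simp: F2_hyperplane_def)
  then show "slice W2 i = UNIV"
    using block_iff[of "v + axis i e" v for e] step[of v] by (auto simp: slice_def add.commute)
qed

lemma card_W1: "card W1 = card W"
proof -
  have "{y. G 0 + G y \<in> W} = W1"
    using block_iff[of 0] W1U F2_subspace_zero[OF U_sub] by auto
  then show ?thesis
    using card_translated_preimage[OF G_bij, where s = 0 and A = W] by simp
qed

theorem blocks_eq_coordinate_subspace:
  defines "C \<equiv> coordinate_subspace {i. slice W i = UNIV}"
  shows "W = C" "W1 = C" "W2 = C"
proof -
  have "W1 \<subseteq> C" "W2 \<subseteq> C" using W1_W2_subset_coordinate_subspace by (auto simp: C_def)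
  moreover have "C \<subseteq> W" "C \<subseteq> W1" "C \<subseteq> W2"
    unfolding C_def using slice_W1_W2_eq_UNIV
    by (intro coordinate_subspace_subset W_sub W1_sub W2_sub; simp)+
  ultimately show W1: "W1 = C" and "W2 = C" by auto
  show "W = C"
    using card_subset_eq[OF finite \<open>C \<subseteq> W\<close>] card_W1 by (simp add: W1)
qed

end

theorem lemma3p16:
  fixes g :: "'b::finite \<Rightarrow> (bit^'m::finite \<Rightarrow> bit^'m)"
    and U W W1 W2 :: "((bit^'m)^'b) set"
  assumes b_gt1: "CARD('b) > 1"
    and m_ge4: "CARD('m) \<ge> 4"
    and g_bij: "\<And>i. bij (g i)"
    and zero: "parallel_map g 0 = 0"
    and diff4: "\<And>i. diff_uniform (g i) 4"
    and nhat0: "\<And>i. nhat (g i) = 0"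
    and U_sub: "F2_subspace U" and U_dim: "card U = 2 ^ (CARD('m) * CARD('b) - 1)"
    and W1_sub: "F2_subspace W1" and W1U: "W1 \<subseteq> U"
    and W2_sub: "F2_subspace W2" and W2U: "W2 \<subseteq> U"
    and W_sub: "F2_subspace W"
    and nontriv: "\<not> trivial_partition (Lpart W)"
    and maps: "maps_onto (parallel_map g) (LApart U W1 W2) (Lpart W)"
  shows "is_wall W \<and> is_wall W1 \<and> W = W1 \<and> W1 = W2 \<and> linear_partition (LApart U W1 W2)"
proof -
  have "2 * card U = 2 ^ (CARD('m) * CARD('b))"
  proof -
    have "0 < CARD('m) * CARD('b)" by simp
    then show ?thesis using U_dim by (metis Suc_diff_1 power_Suc)
  qed
  then have U_hyperplane: "F2_hyperplane U"
    using U_sub by (simp add: F2_hyperplane_iff_card card_bit power_mult)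
  have block_iff: "parallel_map g x + parallel_map g y \<in> W \<longleftrightarrow>
      (x \<in> U \<and> y \<in> U \<and> x + y \<in> W1) \<or> (x \<notin> U \<and> y \<notin> U \<and> x + y \<in> W2)" for x y
    unfolding maps_onto_Lpart_same_block_iff[OF bij_is_inj[OF bij_parallel_map[OF g_bij]] W_sub maps,
      symmetric]
    by (rule same_block_LApart_iff[OF U_hyperplane W1_sub W1U W2_sub W2U])
  interpret parallel_LA_onto_L g U W W1 W2
    using m_ge4 g_bij zero diff4 nhat0 U_hyperplane W_sub W1_sub W1U W2_sub W2U block_iff
    by unfold_locales (simp_all add: parallel_map_zero_iff)
  define I where "I = {i. slice W i = UNIV}"
  have W: "W = coordinate_subspace I" "W1 = coordinate_subspace I" "W2 = coordinate_subspace I"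
    using blocks_eq_coordinate_subspace by (simp_all add: I_def)
  have "I \<noteq> {}" "I \<noteq> UNIV"
    using nontriv W(1) by (auto simp: trivial_partition_def coordinate_subspace_empty Lpart_zero
        coordinate_subspace_UNIV Lpart_UNIV)
  then have "is_wall W" unfolding is_wall_def W(1) coordinate_subspace_def by blast
  moreover have "linear_partition (LApart U W1 W2)"
    using LApart_eq_Lpart[OF U_hyperplane, of W1] W1_sub W by (auto simp: linear_partition_def)
  ultimately show ?thesis using W by simp
qed

end
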